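(* Let $n\ge 3$ and let $P(G(n))$ be the power graph of the gyrogroup $G(n)$ (defined in the context). Then $Int(P(G(n)))=Ce(P(G(n)))$ and $Cl(P(G(n)))=P(G(n))$.
   Context: Let $n\ge 3$ be an integer and $m=2^{n-1}$. Let $P(n)=\{0,1,\dots,m-1\}$, $H(n)=\{m,m+1,\dots,2^n-1\}$ and $G(n)=P(n)\cup H(n)$. For $i,j\in G(n)$ let $t,s,k\in P(n)$ be the residues modulo $m$ (taken in $\{0,\dots,m-1\}$) of $i+j$, $i+(\frac m2-1)j$ and $(\frac m2+1)i+(\frac m2-1)j$, respectively, and define $i\oplus j=t$ if $i,j\in P(n)$; $i\oplus j=t+m$ if $i\in P(n),j\in H(n)$; $i\oplus j=s+m$ if $i\in H(n),j\in P(n)$; $i\oplus j=k$ if $i,j\in H(n)$. Then $(G(n),\oplus)$ is a gyrogroup with identity $e=0$. Powers are defined by $a^1=a$, $a^{k+1}=a^k\oplus a$. The power graph $P(G(n))$ is the simple undirected graph with vertex set $G(n)$ in which distinct vertices $u,v$ are adjacent if and only if $u^k=v$ or $v^k=u$ for some positive integer $k$. In a connected graph $G$: a vertex $v$ is a center vertex if its eccentricity equals the radius of $G$, and the center $Ce(G)$ is the subgraph induced by the center vertices; a vertex $v$ is an interior vertex if for every vertex $u\ne v$ there is a vertex $w$ with $d(u,w)=d(u,v)+d(v,w)$, and the interior $Int(G)$ is the subgraph induced by the interior vertices. For a graph $G$ of order $N$, the closure $Cl(G)$ is obtained by repeatedly adding an edge between non-adjacent vertices whose degree sum is at least $N$ until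 no such pair remains. *)

theory Defs
  imports Main
begin

definition gm :: "nat \<Rightarrow> nat" where "gm n = 2 ^ (n - 1)"

definition carrierG :: "nat \<Rightarrow> nat set" where "carrierG n = {0..<2 ^ n}"

definition goplus :: "nat \<Rightarrow> nat \<Rightarrow> nat \<Rightarrow> nat" where
  "goplus n i j =
     (let m = gm n;
          t = (i + j) mod m;
          s = (i + (m div 2 - 1) * j) mod m;
          k = ((m div 2 + 1) * i + (m div 2 - 1) * j) mod m
      in if i < m \<and> j < m then t
         else if i < m \<and> m \<le> j then t + m
         else if m \<le> i \<and> j < m then s + m
         else k)"

text \<open>Powers: a^1 = a, a^(k+1) = a^k \<oplus> a (the value at exponent 0 is irrelevant).\<close>
fun gpow :: "nat \<Rightarrow> nat \<Rightarrow> nat \<Rightarrow> nat" where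
  "gpow n a 0 = 0"
| "gpow n a (Suc 0) = a"
| "gpow n a (Suc (Suc k)) = goplus n (gpow n a (Suc k)) a"

definition power_graph_edges :: "nat \<Rightarrow> (nat \<times> nat) set" where
  "power_graph_edges n = {(u, v). u \<in> carrierG n \<and> v \<in> carrierG n \<and> u \<noteq> v \<and>
      (\<exists>k>0. gpow n u k = v \<or> gpow n v k = u)}"

definition gdist :: "'a set \<Rightarrow> ('a \<times> 'a) set \<Rightarrow> 'a \<Rightarrow> 'a \<Rightarrow> nat" where
  "gdist V E u v = (LEAST k. (u, v) \<in> (E \<inter> V \<times> V) ^^ k)"

definition ecc :: "'a set \<Rightarrow> ('a \<times> 'a) set \<Rightarrow> 'a \<Rightarrow> nat" where
  "ecc V E v = Max ((gdist V E v) ` V)"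

definition radius :: "'a set \<Rightarrow> ('a \<times> 'a) set \<Rightarrow> nat" where
  "radius V E = Min ((ecc V E) ` V)"

definition center_vertices :: "'a set \<Rightarrow> ('a \<times> 'a) set \<Rightarrow> 'a set" where
  "center_vertices V E = {v \<in> V. ecc V E v = radius V E}"

definition interior_vertices :: "'a set \<Rightarrow> ('a \<times> 'a) set \<Rightarrow> 'a set" where
  "interior_vertices V E = {v \<in> V. \<forall>u\<in>V. u \<noteq> v \<longrightarrow>
      (\<exists>w\<in>V. w \<noteq> v \<and> gdist V E u w = gdist V E u v + gdist V E v w)}"

definition induced_subgraph :: "'a set \<Rightarrow> ('a \<times> 'a) set \<Rightarrow> 'a set \<times> ('a \<times> 'a) set" where
  "induced_subgraph S E = (S, E \<inter> S \<times> S)"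

definition Ce :: "'a set \<Rightarrow> ('a \<times> 'a) set \<Rightarrow> 'a set \<times> ('a \<times> 'a) set" where
  "Ce V E = induced_subgraph (center_vertices V E) E"

definition Int_graph :: "'a set \<Rightarrow> ('a \<times> 'a) set \<Rightarrow> 'a set \<times> ('a \<times> 'a) set" where
  "Int_graph V E = induced_subgraph (interior_vertices V E) E"

definition gdeg :: "'a set \<Rightarrow> ('a \<times> 'a) set \<Rightarrow> 'a \<Rightarrow> nat" where
  "gdeg V E u = card {w \<in> V. (u, w) \<in> E}"

definition closure_step :: "'a set \<Rightarrow> ('a \<times> 'a) set \<Rightarrow> ('a \<times> 'a) set \<Rightarrow> bool" where
  "closure_step V F F' \<longleftrightarrow> (\<exists>u\<in>V. \<exists>v\<in>V. u \<noteq> v \<and> (u, v) \<notin> F \<and>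
      gdeg V F u + gdeg V F v \<ge> card V \<and> F' = F \<union> {(u, v), (v, u)})"

definition is_closure :: "'a set \<Rightarrow> ('a \<times> 'a) set \<Rightarrow> ('a \<times> 'a) set \<Rightarrow> bool" where
  "is_closure V E F \<longleftrightarrow> (E, F) \<in> {(A, B). closure_step V A B}\<^sup>* \<and> \<not> (\<exists>F'. closure_step V F F')"

end

theory Submission
  imports Defs
begin

(* In G(n) the half P is the cyclic group of order m under addition mod m, while every h in H
   satisfies h + h = 0 and 0 + h = h, so its only powers are h and 0.  Hence in the power graph
   the identity 0 is adjacent to every other vertex, each h in H is a pendant vertex hanging at 0,
   and each nonzero vertex has fewer than m = |G(n)|/2 neighbours.  A graph with a universal
   vertex z has diameter at most 2; if moreover every other vertex u has a non-neighbour w, then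
   z is the only vertex of eccentricity 1, and z is the only interior vertex: it lies on the
   geodesic u - z - w, while no geodesic starting at z can pass through another vertex.  So
   interior and centre are both {z}.  The degree bound shows that no pair of non-adjacent
   vertices qualifies for a closure step. *)

locale unique_universal_vertex =
  fixes V :: "'a set" and E :: "('a \<times> 'a) set" and z :: 'a
  assumes finite_V: "finite V"
    and z_in_V: "z \<in> V"
    and universal: "\<And>v. v \<in> V \<Longrightarrow> v \<noteq> z \<Longrightarrow> (z, v) \<in> E \<and> (v, z) \<in> E"
    and non_neighbour: "\<And>u. u \<in> V \<Longrightarrow> u \<noteq> z \<Longrightarrow> \<exists>w\<in>V. w \<noteq> u \<and> (u, w) \<notin> E"
begin

lemma gdist_eq:
  assumes "u \<in> V" "v \<in> V"
  shows "gdist V E u v = (if u = v then 0 else if (u, v) \<in> E then 1 else 2)"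
proof -
  let ?R = "E \<inter> V \<times> V"
  have path_0: "(u, v) \<in> ?R ^^ 0 \<longleftrightarrow> u = v" by simp
  have path_1: "(u, v) \<in> ?R ^^ 1 \<longleftrightarrow> (u, v) \<in> E" using assms by auto
  have path_2: "(u, v) \<in> ?R ^^ 2" if "u \<noteq> v" "(u, v) \<notin> E"
  proof -
    have "u \<noteq> z" "v \<noteq> z" using that assms universal by auto
    then have "(u, z) \<in> ?R" "(z, v) \<in> ?R" using assms universal z_in_V by auto
    then show ?thesis by (auto simp: numeral_2_eq_2)
  qed
  have "1 \<le> k" if "(u, v) \<in> ?R ^^ k" "u \<noteq> v" for k
    using that path_0 by (cases k) auto
  moreover have "2 \<le> k" if "(u, v) \<in> ?R ^^ k" "u \<noteq> v" "(u, v) \<notin> E" for k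
  proof (rule ccontr)
    assume "\<not> 2 \<le> k"
    then have "k = 0 \<or> k = 1" by auto
    then show False using that path_0 path_1 by auto
  qed
  ultimately show ?thesis
    unfolding gdist_def using path_0 path_1 path_2 by (auto intro!: Least_equality)
qed

lemma non_adjacent_ne_z:
  assumes "u \<in> V" "v \<in> V" "u \<noteq> v" "(u, v) \<notin> E"
  shows "u \<noteq> z" "v \<noteq> z"
  using assms universal by auto

lemma gdist_z_le_1: "w \<in> V \<Longrightarrow> gdist V E z w \<le> 1"
  using z_in_V universal by (simp add: gdist_eq)

lemma ecc_z_le_1: "ecc V E z \<le> 1"
  unfolding ecc_def using finite_V z_in_V gdist_z_le_1 by (subst Max_le_iff) auto

lemma ecc_other:
  assumes "v \<in> V" "v \<noteq> z"
  shows "ecc V E v = 2"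
proof -
  obtain w where "w \<in> V" "w \<noteq> v" "(v, w) \<notin> E" using non_neighbour assms by blast
  then have "gdist V E v w = 2" using assms by (simp add: gdist_eq)
  moreover have "gdist V E v x \<le> 2" if "x \<in> V" for x using that assms by (simp add: gdist_eq)
  ultimately show ?thesis
    unfolding ecc_def using finite_V \<open>w \<in> V\<close> by (intro Max_eqI) auto
qed

lemma ecc_z_le_ecc: "v \<in> V \<Longrightarrow> ecc V E z \<le> ecc V E v"
  using ecc_z_le_1 ecc_other[of v] by (cases "v = z") auto

lemma radius_eq_ecc_z: "radius V E = ecc V E z"
  unfolding radius_def using finite_V z_in_V ecc_z_le_ecc by (intro Min_eqI) auto

lemma center_vertices_eq: "center_vertices V E = {z}"
  unfolding center_vertices_def radius_eq_ecc_z
  using z_in_V ecc_z_le_1 ecc_other by fastforce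

lemma interior_vertices_eq: "interior_vertices V E = {z}"
proof -
  have "\<exists>w\<in>V. w \<noteq> z \<and> gdist V E u w = gdist V E u z + gdist V E z w"
    if u: "u \<in> V" "u \<noteq> z" for u
  proof -
    obtain w where w: "w \<in> V" "w \<noteq> u" "(u, w) \<notin> E" using non_neighbour u by blast
    have "w \<noteq> z" using universal u w(3) by blast
    then have "gdist V E u w = 2" "gdist V E u z = 1" "gdist V E z w = 1"
      using u w universal z_in_V by (simp_all add: gdist_eq)
    then show ?thesis using w(1) \<open>w \<noteq> z\<close> by auto
  qed
  then have "z \<in> interior_vertices V E" unfolding interior_vertices_def using z_in_V by blast
  moreover have "v \<notin> interior_vertices V E" if "v \<noteq> z" for v
  proof
    assume "v \<in> interior_vertices V E"
    then have v: "v \<in> V" and geodesic_through_v: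
        "\<forall>u\<in>V. u \<noteq> v \<longrightarrow> (\<exists>w\<in>V. w \<noteq> v \<and> gdist V E u w = gdist V E u v + gdist V E v w)"
      unfolding interior_vertices_def by simp_all
    have "z \<noteq> v" using that by simp
    then obtain w where w: "w \<in> V" "w \<noteq> v"
      and geodesic: "gdist V E z w = gdist V E z v + gdist V E v w"
      using geodesic_through_v z_in_V by blast
    have "gdist V E z v = 1" using gdist_eq[OF z_in_V v] universal[OF v that] that by simp
    moreover have "gdist V E v w \<ge> 1" using gdist_eq[OF v w(1)] w(2) by simp
    ultimately show False using geodesic gdist_z_le_1[OF w(1)] by linarith
  qed
  ultimately show ?thesis by blast
qed

end

lemma is_closure_eq_self_if_degree_sums_lt:
  assumes "\<And>u v. u \<in> V \<Longrightarrow> v \<in> V \<Longrightarrow> u \<noteq> v \<Longrightarrow> (u, v) \<notin> E \<Longrightarrow>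
      gdeg V E u + gdeg V E v < card V"
    and "is_closure V E F"
  shows "F = E"
proof -
  have no_step: "\<not> closure_step V E F'" for F'
    using assms(1) unfolding closure_step_def by fastforce
  from assms(2) have "(E, F) \<in> {(A, B). closure_step V A B}\<^sup>*"
    unfolding is_closure_def by blast
  then show ?thesis by (cases rule: converse_rtranclE) (auto simp: no_step)
qed

lemma gm_pos: "0 < gm n"
  by (simp add: gm_def)

lemma gm_ge_2: "2 \<le> n \<Longrightarrow> 2 \<le> gm n"
  using power_increasing[of 1 "n - 1" "2::nat"] by (simp add: gm_def)

lemma gm_div_2_add_gm_div_2:
  assumes "2 \<le> n"
  shows "gm n div 2 + gm n div 2 = gm n"
proof -
  obtain k where "n = k + 2" using assms le_Suc_ex by (metis add.commute)
  then show ?thesis by (simp add: gm_def)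
qed

lemma carrierG_eq: "1 \<le> n \<Longrightarrow> carrierG n = {0..<2 * gm n}"
  by (cases n) (auto simp: carrierG_def gm_def)

lemma goplus_P_P: "a < gm n \<Longrightarrow> b < gm n \<Longrightarrow> goplus n a b = (a + b) mod gm n"
  by (simp add: goplus_def Let_def)

lemma goplus_0_H: "gm n \<le> h \<Longrightarrow> h < 2 * gm n \<Longrightarrow> goplus n 0 h = h"
  using gm_pos[of n] le_mod_geq[of "gm n" h] by (simp add: goplus_def Let_def)

lemma goplus_H_self:
  assumes "2 \<le> n" "gm n \<le> h"
  shows "goplus n h h = 0"
proof -
  let ?m = "gm n"
  have "(?m div 2 + 1) * h + (?m div 2 - 1) * h = (?m div 2 + 1 + (?m div 2 - 1)) * h"
    by (simp add: distrib_right)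
  also have "?m div 2 + 1 + (?m div 2 - 1) = ?m"
    using gm_div_2_add_gm_div_2[OF assms(1)] gm_pos[of n] by linarith
  finally show ?thesis using assms(2) by (simp add: goplus_def Let_def)
qed

lemma gpow_P:
  assumes "a < gm n"
  shows "gpow n a (Suc k) = (Suc k * a) mod gm n"
proof (induction k)
  case 0
  then show ?case using assms by simp
next
  case (Suc k)
  have "gpow n a (Suc (Suc k)) = ((Suc k * a) mod gm n + a) mod gm n"
    using Suc assms gm_pos[of n] by (simp add: goplus_P_P)
  also have "\<dots> = (Suc (Suc k) * a) mod gm n"
    by (simp add: mod_add_right_eq add.commute)
  finally show ?case .
qed

lemma gpow_H:
  assumes "2 \<le> n" "gm n \<le> h" "h < 2 * gm n"
  shows "gpow n h (Suc k) \<in> {0, h}"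
  by (induction k) (auto simp: goplus_H_self[OF assms(1,2)] goplus_0_H[OF assms(2,3)])

lemma gpow_P_less:
  assumes "a < gm n" "0 < k"
  shows "gpow n a k < gm n"
proof -
  obtain j where "k = Suc j" using assms(2) gr0_implies_Suc by blast
  then show ?thesis using gpow_P[OF assms(1), of j] gm_pos[of n] by simp
qed

lemma gpow_P_gm:
  assumes "a < gm n"
  shows "gpow n a (gm n) = 0"
proof -
  obtain j where j: "gm n = Suc j" using gm_pos[of n] gr0_implies_Suc by blast
  have "gpow n a (gm n) = (gm n * a) mod gm n" by (metis gpow_P[OF assms] j)
  then show ?thesis by simp
qed

lemma power_graph_edges_sym: "(u, v) \<in> power_graph_edges n \<Longrightarrow> (v, u) \<in> power_graph_edges n"
  unfolding power_graph_edges_def by blast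

lemma power_graph_edgesD:
  "(u, v) \<in> power_graph_edges n \<Longrightarrow> u \<in> carrierG n \<and> v \<in> carrierG n \<and> u \<noteq> v"
  unfolding power_graph_edges_def by blast

lemma gpow_eq_0:
  assumes "2 \<le> n"
  shows "\<exists>k>0. gpow n v k = 0"
proof (cases "v < gm n")
  case True
  then show ?thesis using gpow_P_gm[OF True] gm_pos[of n] by (intro exI[of _ "gm n"]) simp
next
  case False
  then have "gpow n v 2 = 0"
    using goplus_H_self[OF assms] by (simp add: numeral_2_eq_2)
  then show ?thesis by (intro exI[of _ 2]) simp
qed

lemma power_graph_zero_adjacent:
  assumes "2 \<le> n" "v \<in> carrierG n" "v \<noteq> 0"
  shows "(0, v) \<in> power_graph_edges n \<and> (v, 0) \<in> power_graph_edges n"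
proof -
  have "0 \<in> carrierG n" by (simp add: carrierG_def)
  then show ?thesis
    using gpow_eq_0[OF assms(1), of v] assms(2,3) unfolding power_graph_edges_def by auto
qed

lemma power_graph_H_adjacent:
  assumes "2 \<le> n" "gm n \<le> h" and edge: "(h, v) \<in> power_graph_edges n"
  shows "v = 0"
proof -
  have carrier: "h < 2 * gm n" "v < 2 * gm n" "h \<noteq> v"
    using power_graph_edgesD[OF edge] carrierG_eq[of n] assms(1) by auto
  obtain k where "0 < k" and k: "gpow n h k = v \<or> gpow n v k = h"
    using edge unfolding power_graph_edges_def by blast
  then obtain j where j: "k = Suc j" using gr0_implies_Suc by blast
  show ?thesis
  proof (cases "gpow n h k = v")
    case True
    then show ?thesis using gpow_H[OF assms(1,2) carrier(1), of j] j carrier(3) by auto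
  next
    case False
    then have v_power: "gpow n v k = h" using k by blast
    show ?thesis
    proof (cases "v < gm n")
      case True
      then show ?thesis using gpow_P_less[OF True \<open>0 < k\<close>] v_power assms(2) by simp
    next
      case False
      then show ?thesis
        using gpow_H[OF assms(1) _ carrier(2), of j] v_power j carrier(3) assms(2) gm_pos[of n]
        by auto
    qed
  qed
qed

lemma power_graph_P_adjacent:
  assumes "2 \<le> n" "p < gm n" "p \<noteq> 0" "(p, v) \<in> power_graph_edges n"
  shows "v < gm n"
  using power_graph_H_adjacent[OF assms(1) _ power_graph_edges_sym[OF assms(4)]] assms(3)
  by (metis not_le)

lemma power_graph_non_neighbour:
  assumes "2 \<le> n" "u \<in> carrierG n" "u \<noteq> 0"
  shows "\<exists>w\<in>carrierG n. w \<noteq> u \<and> (u, w) \<notin> power_graph_edges n"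
proof -
  define w where "w = (if u = gm n then gm n + 1 else gm n)"
  have w: "w \<in> carrierG n" "w \<noteq> u" "gm n \<le> w"
    using carrierG_eq[of n] gm_ge_2[OF assms(1)] assms(1) by (auto simp: w_def)
  moreover have "(u, w) \<notin> power_graph_edges n"
  proof
    assume "(u, w) \<in> power_graph_edges n"
    then have "(w, u) \<in> power_graph_edges n" by (rule power_graph_edges_sym)
    then have "u = 0" by (rule power_graph_H_adjacent[OF assms(1) w(3)])
    with assms(3) show False by simp
  qed
  ultimately show ?thesis by blast
qed

lemma power_graph_unique_universal_vertex:
  assumes "2 \<le> n"
  shows "unique_universal_vertex (carrierG n) (power_graph_edges n) 0"
proof
  show "finite (carrierG n)" "0 \<in> carrierG n" by (simp_all add: carrierG_def)
qed (use assms power_graph_zero_adjacent power_graph_non_neighbour in blast)+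

lemma gdeg_power_graph_less:
  assumes "2 \<le> n" "x \<in> carrierG n" "x \<noteq> 0"
  shows "gdeg (carrierG n) (power_graph_edges n) x < gm n"
proof (cases "x < gm n")
  case True
  have "{w \<in> carrierG n. (x, w) \<in> power_graph_edges n} \<subseteq> {0..<gm n} - {x}"
    using power_graph_P_adjacent[OF assms(1) True assms(3)] power_graph_edgesD by auto
  then have "gdeg (carrierG n) (power_graph_edges n) x \<le> card ({0..<gm n} - {x})"
    unfolding gdeg_def by (intro card_mono) auto
  then show ?thesis using True by simp
next
  case False
  then have "gm n \<le> x" by simp
  then have "{w \<in> carrierG n. (x, w) \<in> power_graph_edges n} \<subseteq> {0}"
    using power_graph_H_adjacent[OF assms(1)] by blast
  then have "gdeg (carrierG n) (power_graph_edges n) x \<le> 1"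
    unfolding gdeg_def using card_mono[of "{0::nat}"] by fastforce
  then show ?thesis using gm_ge_2[OF assms(1)] by simp
qed

lemma power_graph_degree_sum_less:
  assumes "2 \<le> n" "u \<in> carrierG n" "v \<in> carrierG n" "u \<noteq> v"
    "(u, v) \<notin> power_graph_edges n"
  shows "gdeg (carrierG n) (power_graph_edges n) u + gdeg (carrierG n) (power_graph_edges n) v
      < card (carrierG n)"
proof -
  interpret unique_universal_vertex "carrierG n" "power_graph_edges n" 0
    using power_graph_unique_universal_vertex[OF assms(1)] .
  have "u \<noteq> 0" "v \<noteq> 0" using non_adjacent_ne_z assms(2-5) by blast+
  then have "gdeg (carrierG n) (power_graph_edges n) u < gm n"
    "gdeg (carrierG n) (power_graph_edges n) v < gm n"
    using gdeg_power_graph_less[OF assms(1)] assms(2,3) by blast+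
  moreover have "card (carrierG n) = 2 * gm n" using carrierG_eq assms(1) by simp
  ultimately show ?thesis by linarith
qed

theorem mainTheorem12:
  fixes n :: nat
  assumes "n \<ge> 3"
  shows "Int_graph (carrierG n) (power_graph_edges n) = Ce (carrierG n) (power_graph_edges n)
       \<and> (\<forall>F. is_closure (carrierG n) (power_graph_edges n) F \<longrightarrow> F = power_graph_edges n)"
proof
  have n: "2 \<le> n" using assms by simp
  interpret unique_universal_vertex "carrierG n" "power_graph_edges n" 0
    using power_graph_unique_universal_vertex[OF n] .
  show "Int_graph (carrierG n) (power_graph_edges n) = Ce (carrierG n) (power_graph_edges n)"
    unfolding Int_graph_def Ce_def interior_vertices_eq center_vertices_eq ..
  show "\<forall>F. is_closure (carrierG n) (power_graph_edges n) F \<longrightarrow> F = power_graph_edges n"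
    using is_closure_eq_self_if_degree_sums_lt[OF power_graph_degree_sum_less[OF n]] by blast
qed

end
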